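(* For all $\phi,\psi,\chi\in\mathcal{L}(\boxdot)$, the formula $\phi\to\boxdot((\boxdot\phi\wedge\boxdot(\phi\to\psi)\wedge\neg\boxdot\psi)\to\chi)$ is valid on the class of symmetric bimodal frames (both $R_1$ and $R_2$ symmetric).
   Context: Fix a nonempty set $\mathbf{P}$ of propositional variables. A bimodal model is $\langle S,R_1,R_2,V\rangle$ with $S$ nonempty, $R_1,R_2\subseteq S\times S$, $V:\mathbf{P}\to\mathcal{P}(S)$. $\mathcal{L}(\boxdot):\ \phi::=p\mid\neg\phi\mid(\phi\wedge\phi)\mid\boxdot\phi$. Truth: $\mathcal{M},s\vDash\boxdot\phi$ iff for all $t,u$ with $sR_1t$ and $sR_2u$, ($\mathcal{M},t\vDash\phi\iff\mathcal{M},u\vDash\phi$); atoms and Booleans as usual. Valid on a class of frames means true at every state of every model based on a frame of the class. *)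

theory Defs
  imports Main
begin

datatype 'p fm = Atom 'p | Neg "'p fm" | Conj "'p fm" "'p fm" | Dot "'p fm"

definition Imp :: "'p fm \<Rightarrow> 'p fm \<Rightarrow> 'p fm" where
  "Imp a b = Neg (Conj a (Neg b))"

record ('s,'p) bimodel =
  St :: "'s set"
  R1 :: "('s \<times> 's) set"
  R2 :: "('s \<times> 's) set"
  Val :: "'p \<Rightarrow> 's set"

definition is_model :: "('s,'p) bimodel \<Rightarrow> bool" where
  "is_model M \<longleftrightarrow> St M \<noteq> {} \<and> R1 M \<subseteq> St M \<times> St M \<and> R2 M \<subseteq> St M \<times> St M
     \<and> (\<forall>p. Val M p \<subseteq> St M)"

fun sat :: "('s,'p) bimodel \<Rightarrow> 's \<Rightarrow> 'p fm \<Rightarrow> bool" where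
  "sat M s (Atom p) = (s \<in> Val M p)"
| "sat M s (Neg a) = (\<not> sat M s a)"
| "sat M s (Conj a b) = (sat M s a \<and> sat M s b)"
| "sat M s (Dot a) = (\<forall>t u. (s,t) \<in> R1 M \<longrightarrow> (s,u) \<in> R2 M \<longrightarrow> (sat M t a \<longleftrightarrow> sat M u a))"

definition symmetric_frame :: "('s,'p) bimodel \<Rightarrow> bool" where
  "symmetric_frame M \<longleftrightarrow> sym (R1 M) \<and> sym (R2 M)"

definition valid_in :: "('s,'p) bimodel \<Rightarrow> 'p fm \<Rightarrow> bool" where
  "valid_in M \<phi> \<longleftrightarrow> (\<forall>s\<in>St M. sat M s \<phi>)"

end

theory Submission
  imports Defs
begin

text \<open>If \<open>s \<Turnstile> \<phi>\<close> and \<open>t\<close> is a successor of \<open>s\<close>, symmetry makes \<open>s\<close> a successor of \<open>t\<close>.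
  Once \<open>t\<close> has successors of both kinds, \<open>\<boxdot>\<phi>\<close> forces \<open>\<phi>\<close> to hold at all of them
  (they all agree with \<open>s\<close>), and then \<open>\<boxdot>(\<phi> \<rightarrow> \<psi>)\<close> reduces to \<open>\<boxdot>\<psi>\<close>. So the antecedent
  \<open>\<boxdot>\<phi> \<and> \<boxdot>(\<phi> \<rightarrow> \<psi>) \<and> \<not>\<boxdot>\<psi>\<close> fails at every successor of \<open>s\<close>, and the implication
  under \<open>\<boxdot>\<close> holds at all of them, which is more than \<open>\<boxdot>\<close> needs.\<close>

lemma sat_Imp [simp]: "sat M s (Imp a b) \<longleftrightarrow> (sat M s a \<longrightarrow> sat M s b)"
  by (simp add: Imp_def)

lemma sat_Dot_if_sat_all_successors:
  assumes "\<And>t. (s, t) \<in> R1 M \<union> R2 M \<Longrightarrow> sat M t a"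
  shows "sat M s (Dot a)"
  using assms by auto

lemma not_sat_Dot_E:
  assumes "\<not> sat M s (Dot a)"
  obtains t u where "(s, t) \<in> R1 M" "(s, u) \<in> R2 M" "sat M t a \<longleftrightarrow> \<not> sat M u a"
  using assms by auto

lemma not_sat_Dot_modus_ponens_at_predecessor:
  assumes "sat M x \<phi>" and "(t, x) \<in> R1 M \<union> R2 M"
  shows "\<not> sat M t (Conj (Conj (Dot \<phi>) (Dot (Imp \<phi> \<psi>))) (Neg (Dot \<psi>)))"
proof
  assume "sat M t (Conj (Conj (Dot \<phi>) (Dot (Imp \<phi> \<psi>))) (Neg (Dot \<psi>)))"
  then have dot_\<phi>: "sat M t (Dot \<phi>)" and dot_imp: "sat M t (Dot (Imp \<phi> \<psi>))"
    and not_dot_\<psi>: "\<not> sat M t (Dot \<psi>)"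
    by auto
  from not_dot_\<psi> obtain u v where u: "(t, u) \<in> R1 M" and v: "(t, v) \<in> R2 M"
    and disagree: "sat M u \<psi> \<longleftrightarrow> \<not> sat M v \<psi>"
    by (rule not_sat_Dot_E)
  have "sat M u \<phi> \<and> sat M v \<phi>"
    using assms dot_\<phi> u v by auto
  moreover have "sat M u (Imp \<phi> \<psi>) \<longleftrightarrow> sat M v (Imp \<phi> \<psi>)"
    using dot_imp u v by simp
  ultimately show False
    using disagree by simp
qed

theorem mainTheorem13:
  fixes M :: "('s,'p) bimodel" and \<phi> \<psi> \<chi> :: "'p fm"
  assumes "is_model M" and "symmetric_frame M"
  shows "valid_in M (Imp \<phi> (Dot (Imp (Conj (Conj (Dot \<phi>) (Dot (Imp \<phi> \<psi>))) (Neg (Dot \<psi>))) \<chi>)))"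
  unfolding valid_in_def
proof (intro ballI)
  fix s
  have "sat M s (Dot (Imp (Conj (Conj (Dot \<phi>) (Dot (Imp \<phi> \<psi>))) (Neg (Dot \<psi>))) \<chi>))"
    if s\<phi>: "sat M s \<phi>"
  proof (rule sat_Dot_if_sat_all_successors)
    fix t assume "(s, t) \<in> R1 M \<union> R2 M"
    then have ts: "(t, s) \<in> R1 M \<union> R2 M"
      using assms(2) by (auto simp: symmetric_frame_def dest: symD)
    show "sat M t (Imp (Conj (Conj (Dot \<phi>) (Dot (Imp \<phi> \<psi>))) (Neg (Dot \<psi>))) \<chi>)"
      using not_sat_Dot_modus_ponens_at_predecessor[OF s\<phi> ts, of \<psi>]
      by (simp only: sat_Imp simp_thms)
  qed
  then show "sat M s (Imp \<phi> (Dot (Imp (Conj (Conj (Dot \<phi>) (Dot (Imp \<phi> \<psi>))) (Neg (Dot \<psi>))) \<chi>)))"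
    by simp
qed

end
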